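(* Let $\nu$ be a probability measure on $\mathcal S$. Consider (i) for all disjoint $A,B\subset\mathcal S$ with $\nu[A]\le\frac12$ and $\nu[B]\ge\frac12$: $\nu[A]\le C_{\mathrm{var}}\,\mathrm{cap}(A,B)$; (ii) $\mathrm{Var}_\nu[f]\le C_{\mathrm{PI}}\,\mathcal E(f)$ for all $f\in\ell^2(\mu)$. If (i) holds with $C_{\mathrm{var}}$ then (ii) holds with $C_{\mathrm{PI}}=4C_{\mathrm{var}}$; if (ii) holds with $C_{\mathrm{PI}}$ then (i) holds with $C_{\mathrm{var}}=2C_{\mathrm{PI}}$. In particular the optimal constants satisfy $\frac12C_{\mathrm{var}}\le C_{\mathrm{PI}}\le4C_{\mathrm{var}}$.
   Context: $\mathcal S$ countable; irreducible positive recurrent Markov chain with transition probabilities $p(x,y)$, reversible w.r.t. its invariant probability measure $\mu$; $\mathcal E(f)=\frac12\sum_{x,y}\mu(x)p(x,y)(f(x)-f(y))^2$; $\tau_A=\inf\{t>0:X(t)\in A\}$; $\mathrm{cap}(A,B)=\sum_{x\in A}\mu(x)\mathbb P_x[\tau_B<\tau_A]=\inf\{\mathcal E(g):g|_A=1,g|_B=0\}$, $\mathrm{cap}(\emptyset,B)=0$. *)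

theory Defs
  imports "HOL-Analysis.Analysis"
begin

text \<open>Reversible, irreducible Markov chain on a countable state space, with
  transition probabilities p and invariant probability measure mu.
  (For an irreducible chain, existence of an invariant probability measure is
  equivalent to positive recurrence.)\<close>

definition stochastic_matrix :: "('a \<Rightarrow> 'a \<Rightarrow> real) \<Rightarrow> bool" where
  "stochastic_matrix p \<longleftrightarrow> (\<forall>x y. 0 \<le> p x y) \<and> (\<forall>x. (p x has_sum 1) UNIV)"

definition prob_fun :: "('a \<Rightarrow> real) \<Rightarrow> bool" where
  "prob_fun \<nu> \<longleftrightarrow> (\<forall>x. 0 \<le> \<nu> x) \<and> (\<nu> has_sum 1) UNIV"

definition irreducible_chain :: "('a \<Rightarrow> 'a \<Rightarrow> real) \<Rightarrow> bool" where
  "irreducible_chain p \<longleftrightarrow> (\<forall>x y. (x, y) \<in> {(u, v). 0 < p u v}\<^sup>*)"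

definition invariant_measure :: "('a \<Rightarrow> 'a \<Rightarrow> real) \<Rightarrow> ('a \<Rightarrow> real) \<Rightarrow> bool" where
  "invariant_measure p \<mu> \<longleftrightarrow> (\<forall>y. ((\<lambda>x. \<mu> x * p x y) has_sum \<mu> y) UNIV)"

definition reversible :: "('a \<Rightarrow> 'a \<Rightarrow> real) \<Rightarrow> ('a \<Rightarrow> real) \<Rightarrow> bool" where
  "reversible p \<mu> \<longleftrightarrow> (\<forall>x y. \<mu> x * p x y = \<mu> y * p y x)"

definition markov_setting :: "('a \<Rightarrow> 'a \<Rightarrow> real) \<Rightarrow> ('a \<Rightarrow> real) \<Rightarrow> bool" where
  "markov_setting p \<mu> \<longleftrightarrow> stochastic_matrix p \<and> irreducible_chain p \<and> prob_fun \<mu>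
     \<and> invariant_measure p \<mu> \<and> reversible p \<mu>"

definition meas :: "('a \<Rightarrow> real) \<Rightarrow> 'a set \<Rightarrow> real" where
  "meas \<nu> A = (\<Sum>\<^sub>\<infinity>x\<in>A. \<nu> x)"

definition dirichlet :: "('a \<Rightarrow> 'a \<Rightarrow> real) \<Rightarrow> ('a \<Rightarrow> real) \<Rightarrow> ('a \<Rightarrow> real) \<Rightarrow> ennreal" where
  "dirichlet p \<mu> f = (1/2) * (\<Sum>\<^sub>\<infinity>(x, y)\<in>UNIV. ennreal (\<mu> x * p x y * (f x - f y)\<^sup>2))"

text \<open>Capacity via the Dirichlet principle: inf { E(g) : g = 1 on A, g = 0 on B }.\<close>
definition cap :: "('a \<Rightarrow> 'a \<Rightarrow> real) \<Rightarrow> ('a \<Rightarrow> real) \<Rightarrow> 'a set \<Rightarrow> 'a set \<Rightarrow> ennreal" where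
  "cap p \<mu> A B = (INF g\<in>{g. (\<forall>x\<in>A. g x = 1) \<and> (\<forall>x\<in>B. g x = 0)}. dirichlet p \<mu> g)"

definition l2 :: "('a \<Rightarrow> real) \<Rightarrow> ('a \<Rightarrow> real) \<Rightarrow> bool" where
  "l2 \<mu> f \<longleftrightarrow> (\<lambda>x. \<mu> x * (f x)\<^sup>2) summable_on UNIV"

definition mean :: "('a \<Rightarrow> real) \<Rightarrow> ('a \<Rightarrow> real) \<Rightarrow> real" where
  "mean \<nu> f = (\<Sum>\<^sub>\<infinity>x. \<nu> x * f x)"

text \<open>Variance, valued in [0,\<infinity>]; it is \<infinity> whenever f is not in l2(nu)
  (if f is not nu-integrable the real infsum mean is 0 and the sum of nu f^2 diverges).\<close>
definition variance :: "('a \<Rightarrow> real) \<Rightarrow> ('a \<Rightarrow> real) \<Rightarrow> ennreal" where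
  "variance \<nu> f = (\<Sum>\<^sub>\<infinity>x\<in>UNIV. ennreal (\<nu> x * (f x - mean \<nu> f)\<^sup>2))"

definition var_cond :: "('a \<Rightarrow> 'a \<Rightarrow> real) \<Rightarrow> ('a \<Rightarrow> real) \<Rightarrow> ('a \<Rightarrow> real) \<Rightarrow> ennreal \<Rightarrow> bool" where
  "var_cond p \<mu> \<nu> C \<longleftrightarrow> (\<forall>A B. A \<inter> B = {} \<longrightarrow> meas \<nu> A \<le> 1/2 \<longrightarrow> meas \<nu> B \<ge> 1/2 \<longrightarrow>
      ennreal (meas \<nu> A) \<le> C * cap p \<mu> A B)"

definition PI_cond :: "('a \<Rightarrow> 'a \<Rightarrow> real) \<Rightarrow> ('a \<Rightarrow> real) \<Rightarrow> ('a \<Rightarrow> real) \<Rightarrow> ennreal \<Rightarrow> bool" where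
  "PI_cond p \<mu> \<nu> C \<longleftrightarrow> (\<forall>f. l2 \<mu> f \<longrightarrow> variance \<nu> f \<le> C * dirichlet p \<mu> f)"

end

theory Submission
  imports Defs "HOL-Probability.Probability"
begin

text \<open>
  (i) \<Longrightarrow> (ii): subtract a \<nu>-median m from f and split f - m = \<phi> - \<psi> into positive and negative
  parts. Then Var f \<le> \<nu>[(f - m)^2] = \<nu>[\<phi>^2] + \<nu>[\<psi>^2] and E(\<phi>) + E(\<psi>) \<le> E(f), so it suffices
  to treat \<phi> \<ge> 0 with \<nu>[\<phi> = 0] \<ge> 1/2. By the layer-cake formula
  \<nu>[\<phi>^2] = \<integral> 2t \<nu>[\<phi> \<ge> t] dt, and (i) applied to A = {\<phi> \<ge> t}, B = {\<phi> = 0} with the test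
  function g_t = min 1 (\<phi>^2/t^2) gives \<nu>[\<phi>^2] \<le> C \<integral> 2t E(g_t) dt. Exchanging the integral
  with the edge sum, each edge contributes \<integral> 2t (g_t(b) - g_t(a))^2 dt \<le> 4 (b - a)^2.

  (ii) \<Longrightarrow> (i): a function g that is 1 on A and 0 on B may be clamped to [0,1] without increasing
  E(g); the clamped function has variance at least \<nu>[A]/2 because \<nu>[B] \<ge> 1/2 \<ge> \<nu>[A].
  Taking the infimum over g gives the capacity. When the constant is \<infinity>, irreducibility is
  needed to see that cap(A, B) > 0.
\<close>

section \<open>Nonnegative infinite sums\<close>

lemma infsum_ennreal:
  fixes f :: "'a \<Rightarrow> real"
  assumes "f summable_on A" "\<And>x. x \<in> A \<Longrightarrow> 0 \<le> f x"
  shows "(\<Sum>\<^sub>\<infinity>x\<in>A. ennreal (f x)) = ennreal (\<Sum>\<^sub>\<infinity>x\<in>A. f x)"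
proof -
  have "\<And>F. \<lbrakk>finite F; F \<subseteq> A\<rbrakk> \<Longrightarrow> sum (ennreal \<circ> f) F = ennreal (sum f F)"
    by (metis (mono_tags, lifting) comp_def assms(2) subsetD sum.cong sum_ennreal)
  then have "infsum (ennreal \<circ> f) A = ennreal (infsum f A)"
    by (simp add: infsum_comm_additive_general assms(1))
  then show ?thesis by (simp add: comp_def)
qed

lemma summable_on_if_infsum_ennreal_finite:
  fixes f :: "'a \<Rightarrow> real"
  assumes "(\<Sum>\<^sub>\<infinity>x\<in>A. ennreal (f x)) < \<infinity>" "\<And>x. x \<in> A \<Longrightarrow> 0 \<le> f x"
  shows "f summable_on A"
proof (rule nonneg_bdd_above_summable_on)
  show "\<And>x. x \<in> A \<Longrightarrow> 0 \<le> f x" by fact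
  obtain r where r: "(\<Sum>\<^sub>\<infinity>x\<in>A. ennreal (f x)) = ennreal r" "0 \<le> r"
    using assms(1) by (cases "(\<Sum>\<^sub>\<infinity>x\<in>A. ennreal (f x))") auto
  show "bdd_above (sum f ` {F. F \<subseteq> A \<and> finite F})"
  proof (rule bdd_aboveI2)
    fix F assume F: "F \<in> {F. F \<subseteq> A \<and> finite F}"
    have "ennreal (sum f F) = (\<Sum>x\<in>F. ennreal (f x))"
      using F assms(2) by (subst sum_ennreal) auto
    also have "\<dots> \<le> (\<Sum>\<^sub>\<infinity>x\<in>A. ennreal (f x))"
      using F by (subst nonneg_infsum_complete) (auto intro: SUP_upper)
    finally show "sum f F \<le> r"
      using r by (metis ennreal_le_iff)
  qed
qed

lemma infsum_ennreal_eq_nn_integral: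
  fixes g :: "'a \<Rightarrow> ennreal"
  assumes "countable A"
  shows "infsum g A = (\<integral>\<^sup>+x. g x \<partial>count_space A)"
proof (cases "finite A")
  case True then show ?thesis by (simp add: nn_integral_count_space_finite)
next
  case False
  have bij: "bij_betw (from_nat_into A) UNIV A"
    using bij_betw_from_nat_into[OF assms False] .
  have "(\<integral>\<^sup>+x. g x \<partial>count_space A) = (\<integral>\<^sup>+n. g (from_nat_into A n) \<partial>count_space UNIV)"
    by (simp add: nn_integral_bij_count_space[symmetric, OF bij])
  also have "\<dots> = (\<Sum>n. g (from_nat_into A n))"
    by (rule nn_integral_count_space_nat)
  also have "\<dots> = infsum (\<lambda>n. g (from_nat_into A n)) UNIV"
  proof -
    have "((\<lambda>n. g (from_nat_into A n)) has_sum infsum (\<lambda>n. g (from_nat_into A n)) UNIV) UNIV"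
      by (rule has_sum_infsum) (rule nonneg_summable_on_complete, simp)
    then have "(\<lambda>n. g (from_nat_into A n)) sums infsum (\<lambda>n. g (from_nat_into A n)) UNIV"
      by (rule has_sum_imp_sums)
    then show ?thesis by (simp add: sums_iff)
  qed
  also have "\<dots> = infsum g A"
    using infsum_reindex[of "from_nat_into A" UNIV g] bij
    by (simp add: bij_betw_def comp_def)
  finally show ?thesis ..
qed

lemma infsum_ennreal_cmult:
  fixes g :: "'a \<Rightarrow> ennreal"
  assumes "countable A"
  shows "(\<Sum>\<^sub>\<infinity>x\<in>A. c * g x) = c * (\<Sum>\<^sub>\<infinity>x\<in>A. g x)"
  using assms by (simp add: infsum_ennreal_eq_nn_integral nn_integral_cmult)

lemma infsum_ennreal_ge_term:
  fixes g :: "'a \<Rightarrow> ennreal"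
  assumes "x \<in> A"
  shows "g x \<le> infsum g A"
  using infsum_mono_neutral[of g "{x}" g A] assms by (simp add: nonneg_summable_on_complete)

lemma nn_integral_infsum:
  fixes f :: "'i \<Rightarrow> real \<Rightarrow> ennreal"
  assumes "countable I" "\<And>i. i \<in> I \<Longrightarrow> f i \<in> borel_measurable lborel"
  shows "(\<integral>\<^sup>+t. (\<Sum>\<^sub>\<infinity>i\<in>I. f i t) \<partial>lborel) = (\<Sum>\<^sub>\<infinity>i\<in>I. \<integral>\<^sup>+t. f i t \<partial>lborel)"
  using nn_integral_count_space_nn_integral[OF assms] assms(1)
  by (simp add: infsum_ennreal_eq_nn_integral)

section \<open>Probability functions and medians\<close>

lemma prob_fun_nonneg: "prob_fun \<nu> \<Longrightarrow> 0 \<le> \<nu> x"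
  by (simp add: prob_fun_def)

lemma prob_fun_summable_on: "prob_fun \<nu> \<Longrightarrow> \<nu> summable_on A"
  unfolding prob_fun_def
  by (meson has_sum_imp_summable summable_on_subset_banach subset_UNIV)

lemma meas_nonneg: "prob_fun \<nu> \<Longrightarrow> 0 \<le> meas \<nu> A"
  unfolding meas_def by (intro infsum_nonneg prob_fun_nonneg)

lemma meas_UNIV: "prob_fun \<nu> \<Longrightarrow> meas \<nu> UNIV = 1"
  unfolding meas_def prob_fun_def by (simp add: infsumI)

lemma infsum_ennreal_prob_fun:
  "prob_fun \<nu> \<Longrightarrow> (\<Sum>\<^sub>\<infinity>x\<in>A. ennreal (\<nu> x)) = ennreal (meas \<nu> A)"
  unfolding meas_def by (intro infsum_ennreal prob_fun_summable_on prob_fun_nonneg)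

lemma meas_le_half_if_disjoint:
  assumes "prob_fun \<nu>" "A \<inter> B = {}" "1/2 \<le> meas \<nu> B"
  shows "meas \<nu> A \<le> 1/2"
proof -
  have "meas \<nu> A + meas \<nu> B = meas \<nu> (A \<union> B)"
    unfolding meas_def using assms by (intro infsum_Un_disjoint[symmetric] prob_fun_summable_on)
  also have "\<dots> \<le> meas \<nu> UNIV"
    unfolding meas_def using assms(1)
    by (intro infsum_mono_neutral prob_fun_summable_on) (auto simp: prob_fun_nonneg)
  finally show ?thesis using assms meas_UNIV by fastforce
qed

lemma measure_embed_pmf:
  fixes \<nu> :: "'a::countable \<Rightarrow> real"
  assumes "prob_fun \<nu>"
  shows "measure_pmf.prob (embed_pmf \<nu>) A = meas \<nu> A"
proof -
  have nn_integral_eq: "(\<integral>\<^sup>+x. ennreal (\<nu> x) \<partial>count_space B) = ennreal (meas \<nu> B)" for B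
    by (simp add: infsum_ennreal_eq_nn_integral[symmetric] infsum_ennreal_prob_fun[OF assms])
  have "emeasure (measure_pmf (embed_pmf \<nu>)) A = ennreal (meas \<nu> A)"
    using nn_integral_pmf[where p="embed_pmf \<nu>" and A=A] nn_integral_eq[of UNIV] nn_integral_eq[of A]
    by (simp add: pmf_embed_pmf prob_fun_nonneg[OF assms] meas_UNIV[OF assms])
  then show ?thesis
    by (simp add: measure_pmf.emeasure_eq_measure meas_nonneg[OF assms])
qed

lemma (in real_distribution) median_exists:
  "\<exists>m. 1/2 \<le> measure M {..m} \<and> 1/2 \<le> measure M {m..}"
proof -
  define T where "T = {x. 1/2 \<le> cdf M x}"
  have "\<forall>\<^sub>F x in at_top. 1/2 < cdf M x"
    using cdf_lim_at_top_prob by (rule order_tendstoD) simp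
  then obtain t where "t \<in> T"
    unfolding T_def by (metis (mono_tags) eventually_at_top_linorder less_imp_le mem_Collect_eq order_refl)
  moreover have "\<forall>\<^sub>F x in at_bot. cdf M x < 1/2"
    using cdf_lim_at_bot by (rule order_tendstoD) simp
  then obtain b where b: "\<And>x. x \<le> b \<Longrightarrow> cdf M x < 1/2"
    by (auto simp: eventually_at_bot_linorder)
  then have bdd: "bdd_below T"
    unfolding T_def by (metis bdd_belowI less_le_not_le mem_Collect_eq nle_le)
  define m where "m = Inf T"
  have "\<forall>\<^sub>F x in at_right m. 1/2 \<le> cdf M x"
  proof (rule eventually_at_rightI)
    fix x assume "x \<in> {m<..<m + 1}"
    then obtain s where "s \<in> T" "s < x"
      using cInf_less_iff[of T x] \<open>t \<in> T\<close> bdd unfolding m_def by auto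
    then show "1/2 \<le> cdf M x"
      unfolding T_def using cdf_nondecreasing[of s x] by simp
  qed simp
  moreover have "(cdf M \<longlongrightarrow> cdf M m) (at_right m)"
    using cdf_is_right_cont[of m] by (simp add: continuous_within)
  ultimately have "1/2 \<le> cdf M m"
    by (intro tendsto_lowerbound[of "cdf M" "cdf M m" "at_right m"]) simp_all
  then have le: "1/2 \<le> measure M {..m}"
    by (simp add: cdf_def2)
  have "\<forall>\<^sub>F x in at_left m. cdf M x \<le> 1/2"
  proof (rule eventually_at_leftI)
    fix x assume "x \<in> {m - 1<..<m}"
    then have "x \<notin> T"
      using cInf_lower[OF _ bdd, of x] unfolding m_def by force
    then show "cdf M x \<le> 1/2" by (simp add: T_def)
  qed simp
  then have "measure M {..<m} \<le> 1/2"
    by (rule tendsto_upperbound[OF cdf_at_left]) simp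
  moreover have "measure M {m..} = 1 - measure M {..<m}"
    using prob_compl[of "{..<m}"] by (simp add: Compl_eq_Diff_UNIV[symmetric] Compl_lessThan)
  ultimately show ?thesis using le by (intro exI[of _ m]) simp
qed

lemma meas_median_exists:
  fixes \<nu> f :: "'a::countable \<Rightarrow> real"
  assumes "prob_fun \<nu>"
  shows "\<exists>m. 1/2 \<le> meas \<nu> {x. f x \<le> m} \<and> 1/2 \<le> meas \<nu> {x. m \<le> f x}"
proof -
  let ?M = "distr (measure_pmf (embed_pmf \<nu>)) borel f"
  interpret real_distribution ?M
    by (intro prob_space.real_distribution_distr measure_pmf.prob_space_axioms) simp
  obtain m where "1/2 \<le> measure ?M {..m}" "1/2 \<le> measure ?M {m..}"
    using median_exists by blast
  then show ?thesis
    by (intro exI[of _ m]) (simp add: measure_distr vimage_def measure_embed_pmf[OF assms])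
qed

section \<open>Dirichlet form and capacity\<close>

lemma markov_setting_nonneg:
  assumes "markov_setting p \<mu>"
  shows "0 \<le> p x y" "0 \<le> \<mu> x" "0 \<le> \<mu> x * p x y"
  using assms by (auto simp: markov_setting_def stochastic_matrix_def prob_fun_def)

lemma markov_setting_mu_pos:
  assumes "markov_setting p \<mu>"
  shows "0 < \<mu> y"
proof -
  have inv: "((\<lambda>x. \<mu> x * p x z) has_sum \<mu> z) UNIV" for z
    using assms by (simp add: markov_setting_def invariant_measure_def)
  obtain x0 where x0: "0 < \<mu> x0"
  proof (rule ccontr)
    assume "\<not> thesis"
    then have "\<mu> = (\<lambda>_. 0)"
      using that markov_setting_nonneg[OF assms] by (metis antisym not_less)
    then show False
      using assms has_sum_unique[OF has_sum_0] by (fastforce simp: markov_setting_def prob_fun_def)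
  qed
  have "(x0, y) \<in> {(u, v). 0 < p u v}\<^sup>*"
    using assms by (simp add: markov_setting_def irreducible_chain_def)
  then show ?thesis
  proof (induction rule: rtrancl_induct)
    case base then show ?case using x0 .
  next
    case (step y z)
    have "(\<Sum>x\<in>{y}. \<mu> x * p x z) \<le> \<mu> z"
      by (rule has_sum_mono_neutral[OF has_sum_finite inv])
        (auto simp: markov_setting_nonneg[OF assms])
    moreover have "0 < \<mu> y * p y z" using step by auto
    ultimately show ?case by simp
  qed
qed

lemma dirichlet_ge_edge:
  assumes "0 \<le> \<mu> x * p x y"
  shows "ennreal (\<mu> x * p x y * (f x - f y)\<^sup>2 / 2) \<le> dirichlet p \<mu> f"
proof -
  have "ennreal (\<mu> x * p x y * (f x - f y)\<^sup>2 / 2) = (1/2) * ennreal (\<mu> x * p x y * (f x - f y)\<^sup>2)"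
    using assms by (simp add: divide_ennreal[symmetric] divide_ennreal_def mult.commute)
  also have "\<dots> \<le> dirichlet p \<mu> f"
    unfolding dirichlet_def
    by (intro mult_left_mono infsum_ennreal_ge_term[where g="\<lambda>(x,y). ennreal (\<mu> x * p x y * (f x - f y)\<^sup>2)" and x="(x,y)", simplified]) auto
  finally show ?thesis .
qed

lemma dirichlet_mono_contraction:
  assumes "\<And>x y. 0 \<le> \<mu> x * p x y" and "\<And>x y. \<bar>h x - h y\<bar> \<le> \<bar>g x - g y\<bar>"
  shows "dirichlet p \<mu> h \<le> dirichlet p \<mu> g"
  unfolding dirichlet_def
proof (intro mult_left_mono infsum_mono nonneg_summable_on_complete)
  fix e :: "'a \<times> 'a"
  obtain x y where e: "e = (x, y)" by fastforce
  have "\<mu> x * p x y * (h x - h y)\<^sup>2 \<le> \<mu> x * p x y * (g x - g y)\<^sup>2"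
    using assms by (intro mult_left_mono) (auto simp: abs_le_square_iff)
  then show "(case e of (x, y) \<Rightarrow> ennreal (\<mu> x * p x y * (h x - h y)\<^sup>2))
      \<le> (case e of (x, y) \<Rightarrow> ennreal (\<mu> x * p x y * (g x - g y)\<^sup>2))"
    unfolding e by (simp add: ennreal_leI)
qed auto

lemma sq_diff_pos_part_add_neg_part_le:
  fixes u v :: real
  shows "(max 0 u - max 0 v)\<^sup>2 + (max 0 (-u) - max 0 (-v))\<^sup>2 \<le> (u - v)\<^sup>2"
proof -
  have "0 \<le> - (u * v)" if "u \<ge> 0 \<longleftrightarrow> v < 0"
    using that by (auto simp: mult_nonneg_nonpos mult_nonpos_nonneg)
  then show ?thesis
    by (cases "u \<ge> 0"; cases "v \<ge> 0") (simp_all add: power2_eq_square algebra_simps)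
qed

lemma dirichlet_pos_part_add_neg_part_le:
  assumes "\<And>x y. 0 \<le> \<mu> x * p x y"
  shows "dirichlet p \<mu> (\<lambda>x. max 0 (f x - m)) + dirichlet p \<mu> (\<lambda>x. max 0 (m - f x))
    \<le> dirichlet p \<mu> f"
proof -
  let ?e = "\<lambda>g (x, y). ennreal (\<mu> x * p x y * (g x - g y)\<^sup>2)"
  let ?fp = "\<lambda>x. max 0 (f x - m)" and ?fn = "\<lambda>x. max 0 (m - f x)"
  have edge: "?e ?fp e + ?e ?fn e \<le> ?e f e" for e
  proof -
    obtain x y where e: "e = (x, y)" by fastforce
    have "(?fp x - ?fp y)\<^sup>2 + (?fn x - ?fn y)\<^sup>2 \<le> (f x - f y)\<^sup>2"
      using sq_diff_pos_part_add_neg_part_le[of "f x - m" "f y - m"] by simp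
    then have "\<mu> x * p x y * (?fp x - ?fp y)\<^sup>2 + \<mu> x * p x y * (?fn x - ?fn y)\<^sup>2
        \<le> \<mu> x * p x y * (f x - f y)\<^sup>2"
      using assms[of x y] by (simp add: distrib_left[symmetric] mult_left_mono)
    then show ?thesis
      using assms[of x y] by (simp add: e ennreal_plus[symmetric] del: ennreal_plus)
  qed
  have "dirichlet p \<mu> ?fp + dirichlet p \<mu> ?fn = (1/2) * (infsum (?e ?fp) UNIV + infsum (?e ?fn) UNIV)"
    unfolding dirichlet_def by (simp add: distrib_left)
  also have "\<dots> = (1/2) * (\<Sum>\<^sub>\<infinity>e. ?e ?fp e + ?e ?fn e)"
    by (subst infsum_add) (auto intro: nonneg_summable_on_complete)
  also have "\<dots> \<le> dirichlet p \<mu> f"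
    unfolding dirichlet_def
    by (intro mult_left_mono infsum_mono nonneg_summable_on_complete edge) auto
  finally show ?thesis .
qed

lemma min_mult_sq_add_le_max:
  fixes c d u v :: real
  assumes "0 \<le> c" "0 \<le> d"
  shows "min c d / 4 * (u + v)\<^sup>2 \<le> max (c * u\<^sup>2) (d * v\<^sup>2)"
proof -
  have "(u + v)\<^sup>2 \<le> 2 * u\<^sup>2 + 2 * v\<^sup>2"
    using zero_le_power2[of "u - v"] by (simp add: power2_diff power2_sum)
  then have "min c d * (u + v)\<^sup>2 \<le> min c d * (2 * u\<^sup>2 + 2 * v\<^sup>2)"
    using assms by (intro mult_left_mono) auto
  then have "min c d / 4 * (u + v)\<^sup>2 \<le> (min c d * u\<^sup>2 + min c d * v\<^sup>2) / 2"
    by (simp add: algebra_simps)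
  also have "\<dots> \<le> (c * u\<^sup>2 + d * v\<^sup>2) / 2"
    by (intro divide_right_mono add_mono mult_right_mono) auto
  also have "\<dots> \<le> max (c * u\<^sup>2) (d * v\<^sup>2)" by simp
  finally show ?thesis .
qed

lemma dirichlet_ge_sq_diff:
  assumes "markov_setting p \<mu>"
  shows "\<exists>c>0. \<forall>g. ennreal (c * (g x - g y)\<^sup>2) \<le> dirichlet p \<mu> g"
proof -
  have "(x, y) \<in> {(u, v). 0 < p u v}\<^sup>*"
    using assms by (simp add: markov_setting_def irreducible_chain_def)
  then show ?thesis
  proof (induction rule: rtrancl_induct)
    case base then show ?case by (intro exI[of _ 1]) auto
  next
    case (step y z)
    then obtain c where c: "c > 0" "\<And>g. ennreal (c * (g x - g y)\<^sup>2) \<le> dirichlet p \<mu> g"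
      by auto
    define d where "d = \<mu> y * p y z / 2"
    have d: "d > 0" using step markov_setting_mu_pos[OF assms, of y] by (auto simp: d_def)
    have "ennreal (min c d / 4 * (g x - g z)\<^sup>2) \<le> dirichlet p \<mu> g" for g
    proof -
      have "ennreal (min c d / 4 * (g x - g z)\<^sup>2)
          \<le> ennreal (max (c * (g x - g y)\<^sup>2) (d * (g y - g z)\<^sup>2))"
        using min_mult_sq_add_le_max[of c d "g x - g y" "g y - g z"] c d
        by (intro ennreal_leI) simp
      also have "\<dots> \<le> dirichlet p \<mu> g"
        using c(2)[of g] dirichlet_ge_edge[of \<mu> y p z g] markov_setting_nonneg[OF assms]
        by (simp add: max_def d_def)
      finally show ?thesis .
    qed
    then show ?case using c d by (intro exI[of _ "min c d / 4"]) auto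
  qed
qed

lemma cap_pos:
  assumes "markov_setting p \<mu>" "x \<in> A" "y \<in> B"
  shows "0 < cap p \<mu> A B"
proof -
  obtain c where c: "c > 0" "\<And>g. ennreal (c * (g x - g y)\<^sup>2) \<le> dirichlet p \<mu> g"
    using dirichlet_ge_sq_diff[OF assms(1), of x y] by auto
  have "ennreal c \<le> cap p \<mu> A B"
    unfolding cap_def
  proof (rule INF_greatest)
    fix g :: "'a \<Rightarrow> real" assume "g \<in> {g. (\<forall>x\<in>A. g x = 1) \<and> (\<forall>x\<in>B. g x = 0)}"
    then show "ennreal c \<le> dirichlet p \<mu> g" using assms c(2)[of g] by simp
  qed
  moreover have "0 < ennreal c" using c(1) by simp
  ultimately show ?thesis by (metis order_less_le_trans)
qed

section \<open>From the capacity bound to the Poincare inequality\<close>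

text \<open>Test functions for the capacity of {\<phi> \<ge> t} against {\<phi> = 0}. A linear profile below t
  would make the integral over t in nn_integral_sq_cutoff_diff diverge; the quadratic one gives
  the constant 4.\<close>

definition sq_cutoff :: "real \<Rightarrow> real \<Rightarrow> real" where
  "sq_cutoff t s = min 1 (s\<^sup>2 / t\<^sup>2)"

lemma sq_cutoff_eq_1: "0 < t \<Longrightarrow> t \<le> s \<Longrightarrow> sq_cutoff t s = 1"
  by (simp add: sq_cutoff_def power_mono)

lemma sq_cutoff_0 [simp]: "sq_cutoff t 0 = 0"
  by (simp add: sq_cutoff_def)

lemma sq_diff_sq_le:
  fixes a s :: real
  assumes "0 \<le> a" "a \<le> s"
  shows "(s\<^sup>2 - a\<^sup>2)\<^sup>2 \<le> 4/3 * (s - a) * (s^3 - a^3)"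
proof -
  have "(s + a)\<^sup>2 = s\<^sup>2 + 2*(s*a) + a\<^sup>2" "(s - a)\<^sup>2 = s\<^sup>2 - 2*(s*a) + a\<^sup>2"
    "4/3 * (s\<^sup>2 + s*a + a\<^sup>2) = 4/3 * s\<^sup>2 + 4/3*(s*a) + 4/3*a\<^sup>2"
    by (simp_all add: power2_eq_square algebra_simps)
  then have sq: "(s + a)\<^sup>2 \<le> 4/3 * (s\<^sup>2 + s*a + a\<^sup>2)"
    using zero_le_power2[of "s - a"] by linarith
  have cube: "(s - a) * (s^3 - a^3) = (s - a)\<^sup>2 * (s\<^sup>2 + s*a + a\<^sup>2)"
    by (simp add: power2_eq_square power3_eq_cube algebra_simps)
  have "(s\<^sup>2 - a\<^sup>2)\<^sup>2 = (s - a)\<^sup>2 * (s + a)\<^sup>2"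
    by (simp add: power2_eq_square algebra_simps)
  also have "\<dots> \<le> (s - a)\<^sup>2 * (4/3 * (s\<^sup>2 + s*a + a\<^sup>2))"
    using sq by (rule mult_left_mono) simp
  also have "\<dots> = 4/3 * (s - a) * (s^3 - a^3)"
    using cube by (simp add: algebra_simps)
  finally show ?thesis .
qed

text \<open>Integrating the left-hand side exactly produces logarithms; the right-hand side integrates
  in closed form (nn_integral_cube_profile).\<close>

lemma sq_cutoff_diff_sq_le:
  fixes a b t :: real
  assumes "0 \<le> a" "a \<le> b" "0 < t"
  shows "2 * t * (sq_cutoff t b - sq_cutoff t a)\<^sup>2
    \<le> 4/3 * (b - a) * (2 * ((min t b)^3 - (min t a)^3) / t^3)"
proof -
  have t2: "t\<^sup>2 > 0" using assms by simp
  consider "t \<le> a" | "a \<le> t" "t \<le> b" | "b \<le> t" by linarith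
  then show ?thesis
  proof cases
    case 1
    then show ?thesis using assms by (simp add: sq_cutoff_eq_1 min_def)
  next
    case 2
    have cutoff: "sq_cutoff t a = a\<^sup>2 / t\<^sup>2" "sq_cutoff t b = 1"
      using 2 assms t2 by (auto simp: sq_cutoff_def field_simps intro!: power_mono)
    have "2 * t * (sq_cutoff t b - sq_cutoff t a)\<^sup>2 = 2 * (t\<^sup>2 - a\<^sup>2)\<^sup>2 / t^3"
      unfolding cutoff using assms by (simp add: field_simps power2_eq_square power3_eq_cube)
    also have "\<dots> \<le> 2 * (4/3 * (t - a) * (t^3 - a^3)) / t^3"
      using sq_diff_sq_le[of a t] 2 assms by (intro divide_right_mono mult_left_mono) auto
    also have "\<dots> \<le> 2 * (4/3 * (b - a) * (t^3 - a^3)) / t^3"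
      using 2 assms power_mono[of a t 3]
      by (intro divide_right_mono mult_left_mono mult_right_mono) auto
    also have "\<dots> = 4/3 * (b - a) * (2 * ((min t b)^3 - (min t a)^3) / t^3)"
      using 2 by (simp add: min_def)
    finally show ?thesis .
  next
    case 3
    have cutoff: "sq_cutoff t a = a\<^sup>2 / t\<^sup>2" "sq_cutoff t b = b\<^sup>2 / t\<^sup>2"
      using 3 assms t2 by (auto simp: sq_cutoff_def field_simps intro!: power_mono)
    have "2 * t * (sq_cutoff t b - sq_cutoff t a)\<^sup>2 = 2 * (b\<^sup>2 - a\<^sup>2)\<^sup>2 / t^3"
      unfolding cutoff using assms by (simp add: field_simps power2_eq_square power3_eq_cube)
    also have "\<dots> \<le> 2 * (4/3 * (b - a) * (b^3 - a^3)) / t^3"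
      using sq_diff_sq_le[of a b] 3 assms by (intro divide_right_mono mult_left_mono) auto
    also have "\<dots> = 4/3 * (b - a) * (2 * ((min t b)^3 - (min t a)^3) / t^3)"
      using 3 assms by (simp add: min_def)
    finally show ?thesis .
  qed
qed

lemma nn_integral_cube_profile_Icc:
  fixes a b :: real
  assumes "0 \<le> a" "a \<le> b" "0 < b"
  shows "(\<integral>\<^sup>+t. ennreal (2 - 2 * a^3 / t^3) * indicator {a..b} t \<partial>lborel)
    = ennreal (2*b - 3*a + a^3 / b\<^sup>2)"
proof (cases "a = 0")
  case True
  have "(\<integral>\<^sup>+t. ennreal (2 - 2 * a^3 / t^3) * indicator {a..b} t \<partial>lborel) = ennreal (2 * b - 2 * a)"
    by (rule nn_integral_FTC_Icc[where F="\<lambda>t. 2 * t"])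
      (use assms in \<open>auto simp: True intro!: derivative_eq_intros\<close>)
  then show ?thesis using True by simp
next
  case False
  then have a0: "a > 0" using assms by simp
  have "(\<integral>\<^sup>+t. ennreal (2 - 2 * a^3 / t^3) * indicator {a..b} t \<partial>lborel)
      = ennreal ((2 * b + a^3 / b\<^sup>2) - (2 * a + a^3 / a\<^sup>2))"
  proof (rule nn_integral_FTC_Icc[where F="\<lambda>t. 2 * t + a^3 / t\<^sup>2"])
    fix x assume x: "x \<in> {a..b}"
    then show "((\<lambda>t. 2 * t + a^3 / t\<^sup>2) has_real_derivative 2 - 2 * a^3 / x^3) (at x)"
      using a0 by (auto intro!: derivative_eq_intros simp: field_simps power2_eq_square power3_eq_cube)
    show "0 \<le> 2 - 2 * a^3 / x^3"
      using x a0 power_mono[of a x 3] by (simp add: field_simps)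
  qed (use assms in auto)
  then show ?thesis
    using a0 by (simp add: field_simps power2_eq_square power3_eq_cube)
qed

lemma nn_integral_cube_profile_atLeast:
  fixes a b :: real
  assumes "0 \<le> a" "a \<le> b" "0 < b"
  shows "(\<integral>\<^sup>+t. ennreal (2 * (b^3 - a^3) / t^3) * indicator {b..} t \<partial>lborel)
    = ennreal ((b^3 - a^3) / b\<^sup>2)"
proof -
  have "(\<integral>\<^sup>+t. ennreal (2 * (b^3 - a^3) / t^3) * indicator {b..} t \<partial>lborel)
      = ennreal (0 - (- (b^3 - a^3) / b\<^sup>2))"
  proof (rule nn_integral_FTC_atLeast[where F="\<lambda>t. - (b^3 - a^3) / t\<^sup>2"])
    fix x assume "b \<le> x"
    then have "0 < x" using assms by simp
    then show "((\<lambda>t. - (b^3 - a^3) / t\<^sup>2) has_real_derivative 2 * (b^3 - a^3) / x^3) (at x)"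
      by (auto intro!: derivative_eq_intros simp: field_simps power2_eq_square power3_eq_cube)
    show "0 \<le> 2 * (b^3 - a^3) / x^3"
      using \<open>0 < x\<close> assms power_mono[of a b 3] by simp
  next
    have "((\<lambda>t::real. - (b^3 - a^3) * inverse (t^2)) \<longlongrightarrow> - (b^3 - a^3) * 0) at_top"
      by (intro tendsto_mult tendsto_const tendsto_inverse_0_at_top filterlim_pow_at_top
          filterlim_ident) simp
    then show "((\<lambda>t. - (b^3 - a^3) / t\<^sup>2) \<longlongrightarrow> 0) at_top"
      by (simp add: divide_inverse)
  qed simp
  moreover have "0 - (- (b^3 - a^3) / b\<^sup>2) = (b^3 - a^3) / b\<^sup>2"
    by (simp add: minus_divide_left)
  ultimately show ?thesis by metis
qed

lemma nn_integral_cube_profile: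
  fixes a b :: real
  assumes "0 \<le> a" "a \<le> b" "0 < b"
  shows "(\<integral>\<^sup>+t. ennreal (2 * ((min t b)^3 - (min t a)^3) / t^3) * indicator {0<..} t \<partial>lborel)
    \<le> ennreal (3 * (b - a))"
proof -
  let ?q1 = "\<lambda>t::real. 2 - 2 * a^3 / t^3" and ?q2 = "\<lambda>t::real. 2 * (b^3 - a^3) / t^3"
  have "ennreal (2 * ((min t b)^3 - (min t a)^3) / t^3) * indicator {0<..} t
      \<le> ennreal (?q1 t) * indicator {a..b} t + ennreal (?q2 t) * indicator {b..} t" for t
  proof (cases "t > 0")
    case True
    consider "t < a" | "a \<le> t" "t \<le> b" | "b < t" by linarith
    then show ?thesis
      by cases (use True assms in \<open>simp_all add: min_def indicator_def field_simps\<close>)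
  qed simp
  then have "(\<integral>\<^sup>+t. ennreal (2 * ((min t b)^3 - (min t a)^3) / t^3) * indicator {0<..} t \<partial>lborel)
      \<le> (\<integral>\<^sup>+t. ennreal (?q1 t) * indicator {a..b} t \<partial>lborel)
        + (\<integral>\<^sup>+t. ennreal (?q2 t) * indicator {b..} t \<partial>lborel)"
    by (subst nn_integral_add[symmetric]) (auto intro: nn_integral_mono)
  also have "\<dots> = ennreal (2*b - 3*a + a^3 / b\<^sup>2) + ennreal ((b^3 - a^3) / b\<^sup>2)"
    using nn_integral_cube_profile_Icc[OF assms] nn_integral_cube_profile_atLeast[OF assms]
    by simp
  also have "\<dots> = ennreal (3 * (b - a))"
  proof -
    have "0 \<le> (b - a)^2 * (2*b + a)"
      using assms by (intro mult_nonneg_nonneg) auto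
    then have "0 \<le> 2*b - 3*a + a^3 / b\<^sup>2"
      using assms by (simp add: field_simps power2_eq_square power3_eq_cube algebra_simps)
    moreover have "0 \<le> (b^3 - a^3) / b\<^sup>2" using assms power_mono[of a b 3] by simp
    ultimately show ?thesis
      using assms by (simp add: ennreal_plus[symmetric] field_simps power2_eq_square power3_eq_cube
          del: ennreal_plus)
  qed
  finally show ?thesis .
qed

lemma nn_integral_sq_cutoff_increment:
  fixes a b :: real
  assumes "0 \<le> a" "a \<le> b"
  shows "(\<integral>\<^sup>+t. ennreal (2*t*(sq_cutoff t b - sq_cutoff t a)\<^sup>2) \<partial>lborel) \<le> ennreal (4*(b-a)\<^sup>2)"
proof (cases "b = 0")
  case True
  then show ?thesis using assms by simp
next
  case False
  then have "0 < b" using assms by simp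
  define c where "c = 4/3*(b-a)"
  have "0 \<le> c" using assms by (simp add: c_def)
  have pointwise: "ennreal (2*t*(sq_cutoff t b - sq_cutoff t a)\<^sup>2)
      \<le> ennreal c * (ennreal (2 * ((min t b)^3 - (min t a)^3) / t^3) * indicator {0<..} t)" for t
  proof (cases "t > 0")
    case False
    then have "2*t \<le> 0" by simp
    then have "2*t*(sq_cutoff t b - sq_cutoff t a)\<^sup>2 \<le> 0"
      by (rule mult_nonpos_nonneg) simp
    then show ?thesis by (simp add: ennreal_neg)
  next
    case True
    have "(min t a)^3 \<le> (min t b)^3" using assms True by (intro power_mono) auto
    then have "ennreal (c * (2 * ((min t b)^3 - (min t a)^3) / t^3))
        = ennreal c * ennreal (2 * ((min t b)^3 - (min t a)^3) / t^3)"
      using \<open>0 \<le> c\<close> True by (intro ennreal_mult) auto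
    then show ?thesis
      using sq_cutoff_diff_sq_le[OF assms True] True
      by (metis c_def ennreal_leI indicator_simps(1) greaterThan_iff mult.right_neutral)
  qed
  have "(\<integral>\<^sup>+t. ennreal (2*t*(sq_cutoff t b - sq_cutoff t a)\<^sup>2) \<partial>lborel)
      \<le> (\<integral>\<^sup>+t. ennreal c * (ennreal (2 * ((min t b)^3 - (min t a)^3) / t^3) * indicator {0<..} t) \<partial>lborel)"
    by (intro nn_integral_mono pointwise)
  also have "\<dots> = ennreal c * (\<integral>\<^sup>+t. ennreal (2 * ((min t b)^3 - (min t a)^3) / t^3) * indicator {0<..} t \<partial>lborel)"
    by (rule nn_integral_cmult) measurable
  also have "\<dots> \<le> ennreal c * ennreal (3 * (b - a))"
    by (intro mult_left_mono nn_integral_cube_profile assms \<open>0 < b\<close>) auto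
  also have "\<dots> = ennreal (c * (3 * (b - a)))"
    using \<open>0 \<le> c\<close> assms by (simp add: ennreal_mult)
  also have "c * (3 * (b - a)) = 4*(b-a)\<^sup>2"
    by (simp add: c_def power2_eq_square field_simps)
  finally show ?thesis .
qed

lemma nn_integral_sq_cutoff_diff:
  fixes a b :: real
  assumes "0 \<le> a" "0 \<le> b"
  shows "(\<integral>\<^sup>+t. ennreal (2*t*(sq_cutoff t a - sq_cutoff t b)\<^sup>2) \<partial>lborel) \<le> ennreal (4*(a-b)\<^sup>2)"
proof (cases "a \<le> b")
  case True
  then show ?thesis
    using nn_integral_sq_cutoff_increment[OF assms(1) True] by (simp add: power2_commute)
next
  case False
  then show ?thesis using nn_integral_sq_cutoff_increment[OF assms(2), of a] by simp
qed

lemma nn_integral_two_t_atMost: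
  fixes c :: real
  assumes "0 \<le> c"
  shows "(\<integral>\<^sup>+t. ennreal (2*t) * indicator {..c} t \<partial>lborel) = ennreal (c\<^sup>2)"
proof -
  have "(\<integral>\<^sup>+t. ennreal (2*t) * indicator {..c} t \<partial>lborel)
      = (\<integral>\<^sup>+t. ennreal (2*t) * indicator {0..c} t \<partial>lborel)"
    by (intro nn_integral_cong) (auto simp: indicator_def ennreal_eq_0_iff)
  also have "\<dots> = ennreal (c\<^sup>2 - 0\<^sup>2)"
    by (rule nn_integral_FTC_Icc[where F="\<lambda>t. t\<^sup>2"]) (auto intro!: derivative_eq_intros assms)
  finally show ?thesis by simp
qed

lemma infsum_sq_eq_nn_integral_meas:
  fixes \<nu> \<phi> :: "'a::countable \<Rightarrow> real"
  assumes "prob_fun \<nu>" "\<And>x. 0 \<le> \<phi> x"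
  shows "(\<Sum>\<^sub>\<infinity>x. ennreal (\<nu> x * (\<phi> x)\<^sup>2))
    = (\<integral>\<^sup>+t. ennreal (2*t) * ennreal (meas \<nu> {x. t \<le> \<phi> x}) \<partial>lborel)"
proof -
  let ?h = "\<lambda>x t. ennreal (\<nu> x) * (ennreal (2*t) * indicator {..\<phi> x} t)"
  have "ennreal (\<nu> x * (\<phi> x)\<^sup>2) = (\<integral>\<^sup>+t. ?h x t \<partial>lborel)" for x
    using assms nn_integral_two_t_atMost[of "\<phi> x"]
    by (simp add: ennreal_mult prob_fun_nonneg nn_integral_cmult)
  then have "(\<Sum>\<^sub>\<infinity>x. ennreal (\<nu> x * (\<phi> x)\<^sup>2)) = (\<integral>\<^sup>+t. (\<Sum>\<^sub>\<infinity>x. ?h x t) \<partial>lborel)"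
    by (simp add: nn_integral_infsum)
  moreover have "(\<Sum>\<^sub>\<infinity>x. ?h x t) = ennreal (2*t) * ennreal (meas \<nu> {x. t \<le> \<phi> x})" for t
  proof -
    have "(\<Sum>\<^sub>\<infinity>x. ?h x t) = ennreal (2*t) * (\<Sum>\<^sub>\<infinity>x. ennreal (\<nu> x) * indicator {..\<phi> x} t)"
      by (simp add: infsum_ennreal_cmult[symmetric] ac_simps)
    also have "(\<Sum>\<^sub>\<infinity>x. ennreal (\<nu> x) * indicator {..\<phi> x} t) = (\<Sum>\<^sub>\<infinity>x\<in>{x. t \<le> \<phi> x}. ennreal (\<nu> x))"
      by (rule infsum_cong_neutral) (auto simp: indicator_def)
    finally show ?thesis by (simp add: infsum_ennreal_prob_fun[OF assms(1)])
  qed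
  ultimately show ?thesis by simp
qed

lemma meas_level_set_le_cap:
  assumes "prob_fun \<nu>" "var_cond p \<mu> \<nu> C" "\<And>x. 0 \<le> \<phi> x"
    and "1/2 \<le> meas \<nu> {x. \<phi> x = 0}" "0 < t"
  shows "ennreal (meas \<nu> {x. t \<le> \<phi> x}) \<le> C * dirichlet p \<mu> (\<lambda>x. sq_cutoff t (\<phi> x))"
proof -
  let ?A = "{x. t \<le> \<phi> x}" and ?B = "{x. \<phi> x = 0}"
  have "?A \<inter> ?B = {}" using assms(5) by auto
  then have "ennreal (meas \<nu> ?A) \<le> C * cap p \<mu> ?A ?B"
    using assms meas_le_half_if_disjoint[of \<nu> ?A ?B] by (simp add: var_cond_def)
  also have "cap p \<mu> ?A ?B \<le> dirichlet p \<mu> (\<lambda>x. sq_cutoff t (\<phi> x))"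
    unfolding cap_def using assms(5) by (intro INF_lower) (simp add: sq_cutoff_eq_1)
  finally show ?thesis by (simp add: mult_left_mono)
qed

lemma ennreal_mult_dirichlet:
  fixes p :: "'a::countable \<Rightarrow> 'a \<Rightarrow> real"
  assumes "\<And>x y. 0 \<le> \<mu> x * p x y"
  shows "ennreal (2*t) * dirichlet p \<mu> g = (1/2) * (\<Sum>\<^sub>\<infinity>e. ennreal (\<mu> (fst e) * p (fst e) (snd e))
    * ennreal (2*t*(g (fst e) - g (snd e))\<^sup>2))"
proof -
  have edge: "ennreal (2*t) * ennreal (\<mu> x * p x y * (g x - g y)\<^sup>2)
      = ennreal (\<mu> x * p x y) * ennreal (2*t*(g x - g y)\<^sup>2)" for x y
  proof (cases "t > 0")
    case False
    then have "2*t \<le> 0" by simp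
    then have "2*t*(g x - g y)\<^sup>2 \<le> 0"
      by (rule mult_nonpos_nonneg) simp
    then show ?thesis using False by (simp add: ennreal_neg)
  qed (use assms in \<open>simp add: ennreal_mult'[symmetric] ennreal_mult[symmetric] algebra_simps\<close>)
  have "ennreal (2*t) * dirichlet p \<mu> g = (1/2) * (\<Sum>\<^sub>\<infinity>e. ennreal (2*t)
      * ennreal (\<mu> (fst e) * p (fst e) (snd e) * (g (fst e) - g (snd e))\<^sup>2))"
    by (simp add: dirichlet_def case_prod_beta' infsum_ennreal_cmult ac_simps)
  then show ?thesis by (simp only: edge)
qed

lemma nn_integral_dirichlet_sq_cutoff:
  fixes p :: "'a::countable \<Rightarrow> 'a \<Rightarrow> real"
  assumes "\<And>x y. 0 \<le> \<mu> x * p x y" "\<And>x. 0 \<le> \<phi> x"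
  shows "(\<integral>\<^sup>+t. ennreal (2*t) * (c * dirichlet p \<mu> (\<lambda>x. sq_cutoff t (\<phi> x))) \<partial>lborel)
    \<le> 4 * c * dirichlet p \<mu> \<phi>"
proof -
  define w where "w e = ennreal (\<mu> (fst e) * p (fst e) (snd e))" for e
  define d where "d e t = ennreal (2*t*(sq_cutoff t (\<phi> (fst e)) - sq_cutoff t (\<phi> (snd e)))\<^sup>2)"
    for e t
  have d_measurable: "d e \<in> borel_measurable borel" for e
    unfolding d_def sq_cutoff_def by measurable
  have "(\<integral>\<^sup>+t. ennreal (2*t) * (c * dirichlet p \<mu> (\<lambda>x. sq_cutoff t (\<phi> x))) \<partial>lborel)
      = (\<integral>\<^sup>+t. (\<Sum>\<^sub>\<infinity>e. c * (1/2) * w e * d e t) \<partial>lborel)"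
  proof (rule nn_integral_cong)
    fix t
    have "ennreal (2*t) * (c * dirichlet p \<mu> (\<lambda>x. sq_cutoff t (\<phi> x)))
        = c * (ennreal (2*t) * dirichlet p \<mu> (\<lambda>x. sq_cutoff t (\<phi> x)))"
      by (simp add: ac_simps)
    then show "ennreal (2*t) * (c * dirichlet p \<mu> (\<lambda>x. sq_cutoff t (\<phi> x)))
        = (\<Sum>\<^sub>\<infinity>e. c * (1/2) * w e * d e t)"
      by (simp add: ennreal_mult_dirichlet[where \<mu>=\<mu> and p=p, OF assms(1)] w_def d_def
          infsum_ennreal_cmult mult.assoc)
  qed
  also have "\<dots> = (\<Sum>\<^sub>\<infinity>e. c * (1/2) * w e * (\<integral>\<^sup>+t. d e t \<partial>lborel))"
    using d_measurable by (subst nn_integral_infsum) (auto simp: nn_integral_cmult)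
  also have "\<dots> \<le> (\<Sum>\<^sub>\<infinity>e. c * (1/2) * w e * ennreal (4 * (\<phi> (fst e) - \<phi> (snd e))\<^sup>2))"
    unfolding d_def
    by (intro infsum_mono nonneg_summable_on_complete mult_left_mono nn_integral_sq_cutoff_diff assms)
      auto
  also have "\<dots> = 4 * c * dirichlet p \<mu> \<phi>"
    using assms(1)
    by (simp add: dirichlet_def case_prod_beta' w_def infsum_ennreal_cmult[symmetric]
        ennreal_mult[symmetric] ennreal_mult' ac_simps)
  finally show ?thesis .
qed

lemma infsum_sq_le_dirichlet:
  fixes p :: "'a::countable \<Rightarrow> 'a \<Rightarrow> real"
  assumes "\<And>x y. 0 \<le> \<mu> x * p x y" "prob_fun \<nu>" "var_cond p \<mu> \<nu> C"
    and "\<And>x. 0 \<le> \<phi> x" "1/2 \<le> meas \<nu> {x. \<phi> x = 0}"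
  shows "(\<Sum>\<^sub>\<infinity>x. ennreal (\<nu> x * (\<phi> x)\<^sup>2)) \<le> 4 * C * dirichlet p \<mu> \<phi>"
proof -
  have level_sets: "ennreal (2*t) * ennreal (meas \<nu> {x. t \<le> \<phi> x})
      \<le> ennreal (2*t) * (C * dirichlet p \<mu> (\<lambda>x. sq_cutoff t (\<phi> x)))" for t
  proof (cases "0 < t")
    case True
    then show ?thesis using meas_level_set_le_cap[OF assms(2-5)] by (simp add: mult_left_mono)
  qed (simp add: ennreal_neg)
  have "(\<Sum>\<^sub>\<infinity>x. ennreal (\<nu> x * (\<phi> x)\<^sup>2))
      = (\<integral>\<^sup>+t. ennreal (2*t) * ennreal (meas \<nu> {x. t \<le> \<phi> x}) \<partial>lborel)"
    by (rule infsum_sq_eq_nn_integral_meas[OF assms(2,4)])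
  also have "\<dots> \<le> (\<integral>\<^sup>+t. ennreal (2*t) * (C * dirichlet p \<mu> (\<lambda>x. sq_cutoff t (\<phi> x))) \<partial>lborel)"
    by (intro nn_integral_mono level_sets)
  also have "\<dots> \<le> 4 * C * dirichlet p \<mu> \<phi>"
    by (rule nn_integral_dirichlet_sq_cutoff[OF assms(1,4)])
  finally show ?thesis .
qed

lemma has_sum_sq_dev_mean:
  fixes \<nu> f :: "'a \<Rightarrow> real"
  assumes "((\<lambda>x. \<nu> x * (f x - c)\<^sup>2) has_sum S) A" "((\<lambda>x. \<nu> x * f x) has_sum M) A" "(\<nu> has_sum 1) A"
  shows "((\<lambda>x. \<nu> x * (f x - M)\<^sup>2) has_sum (S - (M - c)\<^sup>2)) A"
proof -
  have "((\<lambda>x. \<nu> x * (f x - c)\<^sup>2 + (-2*(M-c)) * (\<nu> x * f x) + (2*(M-c)*c + (M-c)\<^sup>2) * \<nu> x)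
      has_sum (S + (-2*(M-c)) * M + (2*(M-c)*c + (M-c)\<^sup>2) * 1)) A"
    by (intro has_sum_add has_sum_cmult_right assms)
  moreover have f_eq: "(\<lambda>x. \<nu> x * (f x - c)\<^sup>2 + (-2*(M-c)) * (\<nu> x * f x) + (2*(M-c)*c + (M-c)\<^sup>2) * \<nu> x)
      = (\<lambda>x. \<nu> x * (f x - M)\<^sup>2)"
    by (rule ext) (simp add: power2_eq_square algebra_simps)
  moreover have S_eq: "S + (-2*(M-c)) * M + (2*(M-c)*c + (M-c)\<^sup>2) * 1 = S - (M - c)\<^sup>2"
    by (simp add: power2_eq_square algebra_simps)
  ultimately show ?thesis by (simp only: f_eq S_eq)
qed

lemma variance_le_infsum_sq_dev:
  fixes \<nu> f :: "'a \<Rightarrow> real"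
  assumes "prob_fun \<nu>"
  shows "variance \<nu> f \<le> (\<Sum>\<^sub>\<infinity>x. ennreal (\<nu> x * (f x - c)\<^sup>2))"
proof (cases "(\<Sum>\<^sub>\<infinity>x. ennreal (\<nu> x * (f x - c)\<^sup>2)) = \<infinity>")
  case False
  note nonneg = prob_fun_nonneg[OF assms]
  have sq_summable: "(\<lambda>x. \<nu> x * (f x - c)\<^sup>2) summable_on UNIV"
    using False nonneg by (intro summable_on_if_infsum_ennreal_finite) (auto simp: top.not_eq_extremum)
  have "(\<lambda>x. \<nu> x * f x) summable_on UNIV"
  proof (rule abs_summable_summable, rule Infinite_Sum.abs_summable_on_comparison_test')
    show "(\<lambda>x. (\<bar>c\<bar> + 1) * \<nu> x + \<nu> x * (f x - c)\<^sup>2) summable_on UNIV"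
      by (intro summable_on_add summable_on_cmult_right prob_fun_summable_on[OF assms] sq_summable)
    fix x
    have "\<bar>u\<bar> \<le> 1 + u\<^sup>2" for u :: real
      using zero_le_power2[of "\<bar>u\<bar> - 1"] zero_le_power2[of u] by (simp add: power2_diff power2_abs)
    from this[of "f x - c"] have "\<bar>f x\<bar> \<le> \<bar>c\<bar> + 1 + (f x - c)\<^sup>2"
      using abs_triangle_ineq2[of "f x" c] by linarith
    then have "\<nu> x * \<bar>f x\<bar> \<le> \<nu> x * (\<bar>c\<bar> + 1 + (f x - c)\<^sup>2)"
      using nonneg by (rule mult_left_mono)
    then show "norm (\<nu> x * f x) \<le> (\<bar>c\<bar> + 1) * \<nu> x + \<nu> x * (f x - c)\<^sup>2"
      using nonneg[of x] by (simp add: abs_mult algebra_simps)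
  qed
  then have "((\<lambda>x. \<nu> x * (f x - mean \<nu> f)\<^sup>2) has_sum
      ((\<Sum>\<^sub>\<infinity>x. \<nu> x * (f x - c)\<^sup>2) - (mean \<nu> f - c)\<^sup>2)) UNIV"
    using assms unfolding mean_def prob_fun_def
    by (intro has_sum_sq_dev_mean has_sum_infsum sq_summable) auto
  then have "variance \<nu> f = ennreal ((\<Sum>\<^sub>\<infinity>x. \<nu> x * (f x - c)\<^sup>2) - (mean \<nu> f - c)\<^sup>2)"
    unfolding variance_def using nonneg
    by (subst infsum_ennreal) (auto simp: has_sum_imp_summable infsumI)
  also have "\<dots> \<le> ennreal (\<Sum>\<^sub>\<infinity>x. \<nu> x * (f x - c)\<^sup>2)"
    by (intro ennreal_leI) simp
  also have "\<dots> = (\<Sum>\<^sub>\<infinity>x. ennreal (\<nu> x * (f x - c)\<^sup>2))"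
    using sq_summable nonneg by (intro infsum_ennreal[symmetric]) auto
  finally show ?thesis .
qed simp

lemma var_cond_imp_PI_cond:
  fixes p :: "'a::countable \<Rightarrow> 'a \<Rightarrow> real"
  assumes "markov_setting p \<mu>" "prob_fun \<nu>" "var_cond p \<mu> \<nu> C"
  shows "PI_cond p \<mu> \<nu> (4 * C)"
  unfolding PI_cond_def
proof (intro allI impI)
  fix f :: "'a \<Rightarrow> real"
  obtain m where m: "1/2 \<le> meas \<nu> {x. f x \<le> m}" "1/2 \<le> meas \<nu> {x. m \<le> f x}"
    using meas_median_exists[OF assms(2)] by blast
  define \<phi> where "\<phi> x = max 0 (f x - m)" for x
  define \<psi> where "\<psi> x = max 0 (m - f x)" for x
  note sq_le_dirichlet = infsum_sq_le_dirichlet[OF markov_setting_nonneg(3)[OF assms(1)] assms(2,3)]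
  have "{x. \<phi> x = 0} = {x. f x \<le> m}" "{x. \<psi> x = 0} = {x. m \<le> f x}"
    by (auto simp: \<phi>_def \<psi>_def max_def)
  then have \<phi>: "(\<Sum>\<^sub>\<infinity>x. ennreal (\<nu> x * (\<phi> x)\<^sup>2)) \<le> 4 * C * dirichlet p \<mu> \<phi>"
    and \<psi>: "(\<Sum>\<^sub>\<infinity>x. ennreal (\<nu> x * (\<psi> x)\<^sup>2)) \<le> 4 * C * dirichlet p \<mu> \<psi>"
    using m by (intro sq_le_dirichlet; simp add: \<phi>_def \<psi>_def)+
  have "ennreal (\<nu> x * (f x - m)\<^sup>2) = ennreal (\<nu> x * (\<phi> x)\<^sup>2) + ennreal (\<nu> x * (\<psi> x)\<^sup>2)" for x
  proof -
    have "(f x - m)\<^sup>2 = (\<phi> x)\<^sup>2 + (\<psi> x)\<^sup>2"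
      by (simp add: \<phi>_def \<psi>_def max_def power2_eq_square algebra_simps)
    then show ?thesis
      using prob_fun_nonneg[OF assms(2), of x]
      by (simp add: ennreal_plus[symmetric] distrib_left del: ennreal_plus)
  qed
  then have "variance \<nu> f \<le> (\<Sum>\<^sub>\<infinity>x. ennreal (\<nu> x * (\<phi> x)\<^sup>2) + ennreal (\<nu> x * (\<psi> x)\<^sup>2))"
    using variance_le_infsum_sq_dev[OF assms(2), of f m] by simp
  also have "\<dots> = (\<Sum>\<^sub>\<infinity>x. ennreal (\<nu> x * (\<phi> x)\<^sup>2)) + (\<Sum>\<^sub>\<infinity>x. ennreal (\<nu> x * (\<psi> x)\<^sup>2))"
    by (rule infsum_add) (auto intro: nonneg_summable_on_complete)
  also have "\<dots> \<le> 4 * C * (dirichlet p \<mu> \<phi> + dirichlet p \<mu> \<psi>)"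
    using add_mono[OF \<phi> \<psi>] by (simp add: distrib_left)
  also have "\<dots> \<le> 4 * C * dirichlet p \<mu> f"
    unfolding \<phi>_def \<psi>_def
    by (intro mult_left_mono dirichlet_pos_part_add_neg_part_le markov_setting_nonneg[OF assms(1)])
      auto
  finally show "variance \<nu> f \<le> 4 * C * dirichlet p \<mu> f" .
qed

section \<open>From the Poincare inequality to the capacity bound\<close>

lemma infsum_sq_dev_const_on:
  fixes \<nu> h :: "'a::countable \<Rightarrow> real"
  assumes "prob_fun \<nu>" "\<And>x. x \<in> A \<Longrightarrow> h x = v"
  shows "(\<Sum>\<^sub>\<infinity>x\<in>A. ennreal (\<nu> x * (h x - M)\<^sup>2)) = ennreal ((v - M)\<^sup>2 * meas \<nu> A)"
proof -
  have "(\<Sum>\<^sub>\<infinity>x\<in>A. ennreal (\<nu> x * (h x - M)\<^sup>2)) = (\<Sum>\<^sub>\<infinity>x\<in>A. ennreal ((v - M)\<^sup>2) * ennreal (\<nu> x))"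
    using assms by (intro infsum_cong) (simp add: prob_fun_nonneg ennreal_mult'[symmetric] mult.commute)
  also have "\<dots> = ennreal ((v - M)\<^sup>2 * meas \<nu> A)"
    using assms(1) by (simp add: infsum_ennreal_cmult infsum_ennreal_prob_fun meas_nonneg ennreal_mult)
  finally show ?thesis .
qed

lemma variance_ge_half_meas:
  fixes \<nu> h :: "'a::countable \<Rightarrow> real"
  assumes "prob_fun \<nu>" "A \<inter> B = {}" "meas \<nu> A \<le> 1/2" "1/2 \<le> meas \<nu> B"
    and "\<And>x. x \<in> A \<Longrightarrow> h x = 1" "\<And>x. x \<in> B \<Longrightarrow> h x = 0"
  shows "ennreal (meas \<nu> A / 2) \<le> variance \<nu> h"
proof -
  define M where "M = mean \<nu> h"
  have "1/2 \<le> (1 - M)\<^sup>2 + M\<^sup>2"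
    using zero_le_power2[of "M - 1/2"] by (simp add: power2_eq_square algebra_simps)
  then have "1/2 * meas \<nu> A \<le> ((1 - M)\<^sup>2 + M\<^sup>2) * meas \<nu> A"
    using meas_nonneg[OF assms(1)] by (rule mult_right_mono)
  then have "meas \<nu> A / 2 \<le> ((1 - M)\<^sup>2 + M\<^sup>2) * meas \<nu> A" by simp
  also have "\<dots> \<le> (1 - M)\<^sup>2 * meas \<nu> A + M\<^sup>2 * meas \<nu> B"
    using assms(3,4) mult_left_mono[of "meas \<nu> A" "meas \<nu> B" "M\<^sup>2"] by (simp add: algebra_simps)
  finally have "ennreal (meas \<nu> A / 2)
      \<le> ennreal ((1 - M)\<^sup>2 * meas \<nu> A) + ennreal ((0 - M)\<^sup>2 * meas \<nu> B)"
    using meas_nonneg[OF assms(1)] by (simp add: ennreal_plus[symmetric] del: ennreal_plus)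
  also have "\<dots> = (\<Sum>\<^sub>\<infinity>x\<in>A \<union> B. ennreal (\<nu> x * (h x - M)\<^sup>2))"
    using assms by (simp add: infsum_Un_disjoint nonneg_summable_on_complete infsum_sq_dev_const_on)
  also have "\<dots> \<le> variance \<nu> h"
    unfolding variance_def M_def by (rule infsum_mono_neutral) (auto intro: nonneg_summable_on_complete)
  finally show ?thesis .
qed

lemma PI_cond_imp_meas_le_dirichlet:
  fixes p :: "'a::countable \<Rightarrow> 'a \<Rightarrow> real"
  assumes "markov_setting p \<mu>" "prob_fun \<nu>" "PI_cond p \<mu> \<nu> C"
    and "A \<inter> B = {}" "meas \<nu> A \<le> 1/2" "1/2 \<le> meas \<nu> B"
    and "\<And>x. x \<in> A \<Longrightarrow> g x = 1" "\<And>x. x \<in> B \<Longrightarrow> g x = 0"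
  shows "ennreal (meas \<nu> A) \<le> 2 * C * dirichlet p \<mu> g"
proof -
  define h where "h x = max 0 (min 1 (g x))" for x
  have "l2 \<mu> h"
    unfolding l2_def
  proof (rule summable_on_comparison_test)
    show "\<mu> summable_on UNIV"
      using assms(1) by (auto simp: markov_setting_def prob_fun_def summable_on_def)
    fix x
    have "(h x)\<^sup>2 \<le> 1" unfolding h_def by (auto simp: max_def min_def abs_square_le_1)
    then show "\<mu> x * (h x)\<^sup>2 \<le> \<mu> x"
      using markov_setting_nonneg(2)[OF assms(1), of x] mult_left_mono[of "(h x)\<^sup>2" 1 "\<mu> x"] by simp
    show "0 \<le> \<mu> x * (h x)\<^sup>2" using markov_setting_nonneg(2)[OF assms(1), of x] by simp
  qed
  have "ennreal (meas \<nu> A / 2) \<le> variance \<nu> h"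
    using assms by (intro variance_ge_half_meas[OF assms(2,4,5,6)]) (auto simp: h_def)
  also have "\<dots> \<le> C * dirichlet p \<mu> h" using assms(3) \<open>l2 \<mu> h\<close> by (simp add: PI_cond_def)
  also have "\<dots> \<le> C * dirichlet p \<mu> g"
    unfolding h_def
    by (intro mult_left_mono dirichlet_mono_contraction markov_setting_nonneg[OF assms(1)])
      (auto simp: max_def min_def abs_if)
  finally have "2 * ennreal (meas \<nu> A / 2) \<le> 2 * (C * dirichlet p \<mu> g)"
    by (intro mult_left_mono) auto
  moreover have "2 * ennreal (meas \<nu> A / 2) = ennreal (meas \<nu> A)"
    using meas_nonneg[OF assms(2), of A] ennreal_mult[of 2 "meas \<nu> A / 2"] by simp
  ultimately show ?thesis by (simp add: mult.assoc)
qed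

lemma ennreal_le_mult_INF:
  fixes a c :: ennreal
  assumes "c \<noteq> \<infinity>" "G \<noteq> {}" "\<And>g. g \<in> G \<Longrightarrow> a \<le> c * F g"
  shows "a \<le> c * (INF g\<in>G. F g)"
proof (cases "c = 0")
  case True
  then show ?thesis using assms(2,3) by fastforce
next
  case False
  have "a = a / c * c"
    using assms(1) False by (simp add: ennreal_divide_times top.not_eq_extremum)
  also have "\<dots> \<le> (INF g\<in>G. F g) * c"
    using assms False by (intro mult_right_mono INF_greatest divide_le_posI_ennreal) auto
  finally show ?thesis by (simp add: mult.commute)
qed

lemma PI_cond_imp_var_cond:
  fixes p :: "'a::countable \<Rightarrow> 'a \<Rightarrow> real"
  assumes "markov_setting p \<mu>" "prob_fun \<nu>" "PI_cond p \<mu> \<nu> C"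
  shows "var_cond p \<mu> \<nu> (2 * C)"
  unfolding var_cond_def
proof (intro allI impI)
  fix A B :: "'a set"
  assume AB: "A \<inter> B = {}" "meas \<nu> A \<le> 1/2" "1/2 \<le> meas \<nu> B"
  let ?G = "{g :: 'a \<Rightarrow> real. (\<forall>x\<in>A. g x = 1) \<and> (\<forall>x\<in>B. g x = 0)}"
  show "ennreal (meas \<nu> A) \<le> 2 * C * cap p \<mu> A B"
  proof (cases "C = \<infinity> \<and> A \<noteq> {}")
    case True
    moreover obtain y where "y \<in> B" using AB(3) by (force simp: meas_def)
    ultimately have "0 < cap p \<mu> A B" using cap_pos[OF assms(1)] by blast
    then show ?thesis using True by (simp add: ennreal_mult_eq_top_iff)
  next
    case False
    show ?thesis
    proof (cases "A = {}")
      case False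
      with \<open>\<not> (C = \<infinity> \<and> A \<noteq> {})\<close> have "C \<noteq> \<infinity>" by blast
      have "(\<lambda>x. if x \<in> A then 1 else 0) \<in> ?G" using AB(1) by auto
      then have "?G \<noteq> {}" by (metis empty_iff)
      then show ?thesis
        unfolding cap_def using \<open>C \<noteq> \<infinity>\<close> AB assms
        by (intro ennreal_le_mult_INF PI_cond_imp_meas_le_dirichlet) (auto simp: ennreal_mult_eq_top_iff)
    qed (simp add: meas_def)
  qed
qed

lemma Inf_le_mult_Inf:
  fixes k :: ennreal
  assumes "0 < k" "k \<noteq> \<infinity>" "\<And>C. P C \<Longrightarrow> Q (k * C)"
  shows "Inf {C. Q C} \<le> k * Inf {C. P C}"
proof -
  have "Inf {C. Q C} = Inf {C. Q C} / k * k"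
    using assms by (simp add: ennreal_divide_times top.not_eq_extremum)
  also have "\<dots> \<le> Inf {C. P C} * k"
    using assms by (intro mult_right_mono Inf_greatest divide_le_posI_ennreal) (auto intro: Inf_lower)
  finally show ?thesis by (simp add: mult.commute)
qed

theorem mainTheorem10:
  fixes p :: "'a::countable \<Rightarrow> 'a \<Rightarrow> real" and \<mu> \<nu> :: "'a \<Rightarrow> real"
  assumes "markov_setting p \<mu>"
    and "prob_fun \<nu>"
  shows "(\<forall>C. var_cond p \<mu> \<nu> C \<longrightarrow> PI_cond p \<mu> \<nu> (4 * C))
       \<and> (\<forall>C. PI_cond p \<mu> \<nu> C \<longrightarrow> var_cond p \<mu> \<nu> (2 * C))
       \<and> (let Cvar = Inf {C. var_cond p \<mu> \<nu> C}; CPI = Inf {C. PI_cond p \<mu> \<nu> C}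
          in Cvar / 2 \<le> CPI \<and> CPI \<le> 4 * Cvar)"
proof -
  note var_PI = var_cond_imp_PI_cond[OF assms] and PI_var = PI_cond_imp_var_cond[OF assms]
  have "Inf {C. PI_cond p \<mu> \<nu> C} \<le> 4 * Inf {C. var_cond p \<mu> \<nu> C}"
    using var_PI by (intro Inf_le_mult_Inf) auto
  moreover have "Inf {C. var_cond p \<mu> \<nu> C} \<le> 2 * Inf {C. PI_cond p \<mu> \<nu> C}"
    using PI_var by (intro Inf_le_mult_Inf) auto
  then have "Inf {C. var_cond p \<mu> \<nu> C} / 2 \<le> Inf {C. PI_cond p \<mu> \<nu> C}"
    by (intro divide_le_posI_ennreal) auto
  ultimately show ?thesis using var_PI PI_var by (simp add: Let_def)
qed

end
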